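(* There exist constants $\epsilon_1'>0$, $\tau_1'>0$ and $C>0$, depending only on $\underline{U}=(1,0)^{\top}$ and $a_\infty$, such that the following holds for all $\tau\in(0,\tau_1')$ and all states $U_L,\hat U_R,U_R$ in the $\epsilon_1'$-neighborhood of $\underline{U}$. (a) If $U_R=\Phi(\beta_1,\beta_2;U_L)$ and $U_R=\Phi(\alpha_1,\alpha_2;U_L,\tau^2)$, then $|\beta_j-\alpha_j|\le C(|\alpha_1|+|\alpha_2|)\tau^2$ for $j=1,2$. (b) If $U_R=\Phi(\beta_1,\beta_2;U_L)$, $\hat U_R=\Phi(\alpha_1,\alpha_2;U_L,\tau^2)$ and $\alpha=|U_R-\hat U_R|$, then $|\beta_j-\alpha_j|\le C(|\alpha_1|+|\alpha_2|)\tau^2+C\alpha$ for $j=1,2$.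
   Context: Fix $\gamma>1$ and $a_\infty>0$; states are $U=(\rho,v)^{\top}$. Velocity function. For $\tau>0$ let $$u(\rho,v;\tau^2)=\tau^{-2}\Big(-1+\sqrt{1-\tau^2\big(v^2+\tfrac{2(\rho^{\gamma-1}-1)}{(\gamma-1)a_\infty^2}\big)}\Big),$$ and let $u(\rho,v;0)=-\tfrac12v^2-\tfrac{\rho^{\gamma-1}-1}{(\gamma-1)a_\infty^2}$. Systems. Set $G(U,\tau^2)=(\rho(1+\tau^2u),v)^{\top}$ and $F(U,\tau^2)=(\rho v,-u)^{\top}$, and consider $\partial_xG(U,\tau^2)+\partial_yF(U,\tau^2)=0$. The $\tau=0$ system is $\partial_xU+\partial_yF(U,0)=0$. Near $\underline{U}$ and for small $\tau\ge0$ these systems are strictly hyperbolic, with characteristic speeds $\lambda_1<\lambda_2$ and genuinely nonlinear fields. Let $r_k(U,\tau^2)$ be the right eigenvectors, normalized by $\nabla_U\lambda_k\cdot r_k=1$. Wave curves. For $k=1,2$, $\Phi_k(\alpha;U,\tau^2)$ denotes the $k$-th physically admissible wave curve through $U$: - it is the Lax shock curve for $\alpha<0$ and the rarefaction curve for $\alpha>0$; - it is $C^2$ in $(\alpha,U,\tau^2)$; - $\Phi_k(0;U,\tau^2)=U$ and $\partial_\alpha\Phi_k(0;U,\tau^2)=r_k(U,\tau^2)$. Write $\Phi_k(\alpha;U):=\Phi_k(\alpha;U,0)$ for the $\tau=0$ system. Compositions: - $\Phi(\alpha_1,\alpha_2;U,\tau^2)=\Phi_2(\alpha_2;\Phi_1(\alpha_1;U,\tau^2),\tau^2)$;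 - $\Phi(\beta_1,\beta_2;U)=\Phi_2(\beta_2;\Phi_1(\beta_1;U))$. *)

theory Defs
  imports "HOL-Analysis.Analysis"
begin

text \<open>States U = (rho, v) are elements of real \<times> real (Euclidean norm).
  The parameter s stands for tau^2.\<close>

definition Ubar :: "real \<times> real" where
  "Ubar = (1, 0)"

definition uvel :: "real \<Rightarrow> real \<Rightarrow> real \<Rightarrow> real \<Rightarrow> real \<Rightarrow> real" where
  "uvel \<gamma> ainf \<rho> v s =
     (if s = 0 then - (v^2) / 2 - (\<rho> powr (\<gamma> - 1) - 1) / ((\<gamma> - 1) * ainf^2)
      else (-1 + sqrt (1 - s * (v^2 + 2 * (\<rho> powr (\<gamma> - 1) - 1) / ((\<gamma> - 1) * ainf^2)))) / s)"

definition Gflux :: "real \<Rightarrow> real \<Rightarrow> real \<times> real \<Rightarrow> real \<Rightarrow> real \<times> real" where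
  "Gflux \<gamma> ainf U s = (fst U * (1 + s * uvel \<gamma> ainf (fst U) (snd U) s), snd U)"

definition Fflux :: "real \<Rightarrow> real \<Rightarrow> real \<times> real \<Rightarrow> real \<Rightarrow> real \<times> real" where
  "Fflux \<gamma> ainf U s = (fst U * snd U, - uvel \<gamma> ainf (fst U) (snd U) s)"

definition C2_on :: "('a::real_normed_vector \<Rightarrow> 'b::real_normed_vector) \<Rightarrow> 'a set \<Rightarrow> bool" where
  "C2_on f S \<longleftrightarrow> (\<exists>D D2. (\<forall>x\<in>S. (f has_derivative blinfun_apply (D x)) (at x)) \<and>
                           (\<forall>x\<in>S. (D has_derivative blinfun_apply (D2 x)) (at x)) \<and>
                           continuous_on S D2)"

text \<open>lam is a characteristic speed of dG U_x + dF U_y = 0 at (U,s) with right eigenvector r,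
  i.e. dF r = lam dG r, r nonzero.\<close>
definition is_char :: "real \<Rightarrow> real \<Rightarrow> real \<Rightarrow> real \<times> real \<Rightarrow> real \<times> real \<Rightarrow> real \<Rightarrow> bool" where
  "is_char \<gamma> ainf lam r U s \<longleftrightarrow> r \<noteq> 0 \<and>
     frechet_derivative (\<lambda>W. Fflux \<gamma> ainf W s) (at U) r =
       lam *\<^sub>R frechet_derivative (\<lambda>W. Gflux \<gamma> ainf W s) (at U) r"

text \<open>Strict hyperbolicity, genuine nonlinearity and normalisation of the eigenvectors
  on the region dist U Ubar < delta, 0 <= s < delta.\<close>
definition char_fields ::
  "real \<Rightarrow> real \<Rightarrow> real \<Rightarrow> (real \<times> real \<Rightarrow> real \<Rightarrow> real) \<Rightarrow> (real \<times> real \<Rightarrow> real \<Rightarrow> real)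
   \<Rightarrow> (real \<times> real \<Rightarrow> real \<Rightarrow> real \<times> real) \<Rightarrow> (real \<times> real \<Rightarrow> real \<Rightarrow> real \<times> real) \<Rightarrow> bool" where
  "char_fields \<gamma> ainf \<delta> lam1 lam2 r1 r2 \<longleftrightarrow>
     (\<forall>U s. dist U Ubar < \<delta> \<and> 0 \<le> s \<and> s < \<delta> \<longrightarrow>
        lam1 U s < lam2 U s \<and>
        is_char \<gamma> ainf (lam1 U s) (r1 U s) U s \<and>
        is_char \<gamma> ainf (lam2 U s) (r2 U s) U s \<and>
        (\<lambda>W. lam1 W s) differentiable (at U) \<and>
        (\<lambda>W. lam2 W s) differentiable (at U) \<and>
        frechet_derivative (\<lambda>W. lam1 W s) (at U) (r1 U s) = 1 \<and>
        frechet_derivative (\<lambda>W. lam2 W s) (at U) (r2 U s) = 1)"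

text \<open>Phi is the k-th physically admissible wave curve (for the k-th field with speed lam
  and normalised eigenvector r): C^2 jointly in (alpha, U, s), passes through U with
  tangent r at alpha = 0, is a rarefaction (integral) curve of r for alpha > 0 and a
  Lax k-shock curve (Rankine--Hugoniot plus Lax entropy inequalities) for alpha < 0.\<close>
definition wave_curve ::
  "real \<Rightarrow> real \<Rightarrow> real \<Rightarrow> (real \<times> real \<Rightarrow> real \<Rightarrow> real) \<Rightarrow> (real \<times> real \<Rightarrow> real \<Rightarrow> real \<times> real)
   \<Rightarrow> (real \<Rightarrow> real \<times> real \<Rightarrow> real \<Rightarrow> real \<times> real) \<Rightarrow> bool" where
  "wave_curve \<gamma> ainf \<delta> lam r Phi \<longleftrightarrow>
     C2_on (\<lambda>(a, U, s). Phi a U s) {(a, U, s). \<bar>a\<bar> < \<delta> \<and> dist U Ubar < \<delta> \<and> \<bar>s\<bar> < \<delta>} \<and>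
     (\<forall>U s. dist U Ubar < \<delta> \<and> 0 \<le> s \<and> s < \<delta> \<longrightarrow>
        Phi 0 U s = U \<and>
        ((\<lambda>a. Phi a U s) has_vector_derivative r U s) (at 0) \<and>
        (\<forall>a. 0 < a \<and> a < \<delta> \<and> dist (Phi a U s) Ubar < \<delta> \<longrightarrow>
             ((\<lambda>b. Phi b U s) has_vector_derivative r (Phi a U s) s) (at a)) \<and>
        (\<forall>a. - \<delta> < a \<and> a < 0 \<and> dist (Phi a U s) Ubar < \<delta> \<longrightarrow>
             (\<exists>\<sigma>. Fflux \<gamma> ainf (Phi a U s) s - Fflux \<gamma> ainf U s =
                     \<sigma> *\<^sub>R (Gflux \<gamma> ainf (Phi a U s) s - Gflux \<gamma> ainf U s) \<and>
                   lam (Phi a U s) s < \<sigma> \<and> \<sigma> < lam U s)))"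

end

theory Submission
  imports Defs
begin

text \<open>
  Both wave curves are \<open>C\<^sup>2\<close> in \<open>(\<alpha>, U, \<tau>\<^sup>2)\<close> and pass through \<open>U\<close> for every \<open>\<tau>\<close>, so changing
  \<open>\<tau>\<^sup>2\<close> moves \<open>\<Phi>(\<alpha>; U, \<tau>\<^sup>2)\<close> by \<open>O(|\<alpha>| \<tau>\<^sup>2)\<close>. For \<open>\<tau> = 0\<close> the composite map \<open>\<beta> \<mapsto> \<Phi>(\<beta>; U\<^sub>L)\<close> is,
  near the background state, a small perturbation of \<open>\<beta> \<mapsto> U\<^sub>L + \<beta>\<^sub>1 r\<^sub>1 + \<beta>\<^sub>2 r\<^sub>2\<close>, where \<open>r\<^sub>1, r\<^sub>2\<close> are
  eigenvectors of the flux Jacobian for distinct speeds and hence independent; therefore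
  \<open>|\<beta> - \<alpha>| \<le> K |\<Phi>(\<beta>; U\<^sub>L) - \<Phi>(\<alpha>; U\<^sub>L)|\<close>. Inserting \<open>\<Phi>(\<alpha>; U\<^sub>L, \<tau>\<^sup>2)\<close> by the triangle inequality
  gives both (a) and (b).
\<close>

lemma norm_triple_le:
  fixes x :: "'a::real_normed_vector" and y :: "'b::real_normed_vector" and z :: "'c::real_normed_vector"
  shows "norm (x, y, z) \<le> norm x + norm y + norm z"
  using norm_Pair_le[of x "(y, z)"] norm_Pair_le[of y z] by simp

lemma C2_on_subset: "C2_on f S \<Longrightarrow> T \<subseteq> S \<Longrightarrow> C2_on f T"
  unfolding C2_on_def using continuous_on_subset by blast

lemma C2_on_openE:
  assumes "C2_on f S" and "open S"
  obtains D D2 where "\<And>x. x \<in> S \<Longrightarrow> (f has_derivative blinfun_apply (D x)) (at x)"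
    and "\<And>x. x \<in> S \<Longrightarrow> (D has_derivative blinfun_apply (D2 x)) (at x)"
    and "\<And>x. x \<in> S \<Longrightarrow> isCont D2 x"
  using assms continuous_on_eq_continuous_at unfolding C2_on_def by metis

lemma linearization_error_small:
  fixes f :: "'a::real_normed_vector \<Rightarrow> 'b::real_normed_vector"
  assumes "open S" "x0 \<in> S"
    and deriv: "\<And>x. x \<in> S \<Longrightarrow> (f has_derivative blinfun_apply (D x)) (at x)"
    and "isCont D x0" and "\<eta> > 0"
  obtains \<rho> where "\<rho> > 0"
    and "\<And>x y. x \<in> ball x0 \<rho> \<Longrightarrow> y \<in> ball x0 \<rho> \<Longrightarrow>
           norm (f x - f y - D x0 (x - y)) \<le> \<eta> * norm (x - y)"
proof -
  obtain \<rho>1 where "\<rho>1 > 0" "ball x0 \<rho>1 \<subseteq> S"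
    using assms open_contains_ball by blast
  moreover obtain \<rho>2 where "\<rho>2 > 0" and close: "\<And>x. dist x x0 < \<rho>2 \<Longrightarrow> dist (D x) (D x0) < \<eta>"
    using \<open>isCont D x0\<close> \<open>\<eta> > 0\<close> unfolding continuous_at_eps_delta by blast
  ultimately have \<rho>: "min \<rho>1 \<rho>2 > 0" "ball x0 (min \<rho>1 \<rho>2) \<subseteq> S" by auto
  show thesis
  proof (rule that[OF \<rho>(1)])
    fix x y assume x: "x \<in> ball x0 (min \<rho>1 \<rho>2)" and y: "y \<in> ball x0 (min \<rho>1 \<rho>2)"
    have "norm (f x - f y - D x0 (x - y)) \<le> norm (x - y) * \<eta>"
    proof (rule differentiable_bound_linearization[where S = "ball x0 (min \<rho>1 \<rho>2)"])
      show "y + t *\<^sub>R (x - y) \<in> ball x0 (min \<rho>1 \<rho>2)" if "t \<in> {0..1}" for t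
      proof -
        have "(1 - t) *\<^sub>R y + t *\<^sub>R x \<in> ball x0 (min \<rho>1 \<rho>2)"
          using that convexD[OF convex_ball y x, of "1 - t" t] by simp
        then show ?thesis by (simp add: algebra_simps)
      qed
      show "(f has_derivative blinfun_apply (D z)) (at z within ball x0 (min \<rho>1 \<rho>2))"
        if "z \<in> ball x0 (min \<rho>1 \<rho>2)" for z
        using deriv \<rho>(2) that by (simp add: has_derivative_at_withinI subset_iff)
      show "onorm (blinfun_apply (D z) - blinfun_apply (D x0)) \<le> \<eta>"
        if "z \<in> ball x0 (min \<rho>1 \<rho>2)" for z
      proof -
        have "dist z x0 < \<rho>2" using that by (simp add: dist_commute)
        then have "norm (D z - D x0) < \<eta>" using close by (simp add: dist_norm)
        moreover have "blinfun_apply (D z) - blinfun_apply (D x0) = blinfun_apply (D z - D x0)"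
          by (simp add: fun_eq_iff blinfun.diff_left)
        ultimately show ?thesis by (simp add: norm_blinfun.rep_eq)
      qed
      show "x0 \<in> ball x0 (min \<rho>1 \<rho>2)" using \<rho> by simp
    qed
    then show "norm (f x - f y - D x0 (x - y)) \<le> \<eta> * norm (x - y)"
      by (simp add: mult.commute)
  qed
qed

lemma continuous_derivative_imp_lipschitz_near:
  fixes f :: "'a::real_normed_vector \<Rightarrow> 'b::real_normed_vector"
  assumes "open S" "x0 \<in> S"
    and "\<And>x. x \<in> S \<Longrightarrow> (f has_derivative blinfun_apply (D x)) (at x)"
    and "isCont D x0"
  obtains \<rho> M where "\<rho> > 0" and "M \<ge> 0"
    and "\<And>x y. x \<in> ball x0 \<rho> \<Longrightarrow> y \<in> ball x0 \<rho> \<Longrightarrow> norm (f x - f y) \<le> M * norm (x - y)"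
proof -
  obtain \<rho> where "\<rho> > 0" and lin: "\<And>x y. x \<in> ball x0 \<rho> \<Longrightarrow> y \<in> ball x0 \<rho> \<Longrightarrow>
      norm (f x - f y - D x0 (x - y)) \<le> 1 * norm (x - y)"
    using linearization_error_small[OF assms zero_less_one] by blast
  show thesis
  proof (rule that[OF \<open>\<rho> > 0\<close>])
    show "norm (D x0) + 1 \<ge> 0" by simp
    fix x y assume "x \<in> ball x0 \<rho>" "y \<in> ball x0 \<rho>"
    have "norm (f x - f y) \<le> norm (f x - f y - D x0 (x - y)) + norm (D x0 (x - y))"
      using norm_triangle_ineq[of "f x - f y - D x0 (x - y)" "D x0 (x - y)"] by simp
    also have "\<dots> \<le> norm (x - y) + norm (D x0) * norm (x - y)"
      using lin[OF \<open>x \<in> ball x0 \<rho>\<close> \<open>y \<in> ball x0 \<rho>\<close>] norm_blinfun[of "D x0" "x - y"] by linarith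
    finally show "norm (f x - f y) \<le> (norm (D x0) + 1) * norm (x - y)"
      by (simp add: algebra_simps)
  qed
qed

lemma mixed_difference_bound:
  fixes F :: "real \<times> 'a::real_normed_vector \<times> real \<Rightarrow> 'b::real_normed_vector"
  assumes "convex S"
    and deriv: "\<And>x. x \<in> S \<Longrightarrow> (F has_derivative blinfun_apply (D x)) (at x)"
    and lipschitz: "\<And>x y. x \<in> S \<Longrightarrow> y \<in> S \<Longrightarrow> norm (D x - D y) \<le> M * norm (x - y)"
    and corners: "(0, U, 0) \<in> S" "(a, U, 0) \<in> S" "(0, U, s) \<in> S" "(a, U, s) \<in> S"
  shows "norm (F (a, U, s) - F (a, U, 0) - (F (0, U, s) - F (0, U, 0))) \<le> M * \<bar>a\<bar> * \<bar>s\<bar>"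
proof -
  have on_S: "(z, U, t) \<in> S" if "z \<in> closed_segment 0 a" "t = 0 \<or> t = s" for z t
  proof -
    have "\<exists>u. 0 \<le> u \<and> u \<le> 1 \<and> z = u * a"
      using that(1) by (simp add: in_segment)
    then obtain u where "0 \<le> u" "u \<le> 1" "z = u * a"
      by blast
    then have "(z, U, t) = (1 - u) *\<^sub>R (0, U, t) + u *\<^sub>R (a, U, t)"
      by (simp add: algebra_simps)
    then show ?thesis
      using convexD[OF \<open>convex S\<close>, of "(0, U, t)" "(a, U, t)" "1 - u" u] \<open>0 \<le> u\<close> \<open>u \<le> 1\<close> that(2) corners
      by auto
  qed
  define q where "q z = F (z, U, s) - F (z, U, 0)" for z
  define q' where "q' z h = D (z, U, s) (h, 0, 0) - D (z, U, 0) (h, 0, 0)" for z h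
  have "(q has_derivative q' z) (at z within closed_segment 0 a)" if "z \<in> closed_segment 0 a" for z
  proof -
    have partial: "((\<lambda>y. F (y, U, t)) has_derivative (\<lambda>h. D (z, U, t) (h, 0, 0))) (at z)"
      if "t = 0 \<or> t = s" for t
    proof -
      have "((\<lambda>y. (y, U, t)) has_derivative (\<lambda>h. (h, 0, 0))) (at z)"
        by (auto intro!: derivative_eq_intros simp: zero_prod_def)
      from has_derivative_compose[OF this deriv[OF on_S[OF \<open>z \<in> closed_segment 0 a\<close> that]]]
      show ?thesis by simp
    qed
    show ?thesis
      unfolding q_def q'_def using has_derivative_diff[OF partial partial]
      by (auto intro: has_derivative_at_withinI)
  qed
  moreover have "onorm (q' z) \<le> M * \<bar>s\<bar>" if "z \<in> closed_segment 0 a" for z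
  proof (rule onorm_le)
    fix h :: real
    have "norm (q' z h) = norm ((D (z, U, s) - D (z, U, 0)) (h, 0, 0))"
      by (simp add: q'_def blinfun.diff_left)
    also have "\<dots> \<le> norm (D (z, U, s) - D (z, U, 0)) * norm (h, 0::'a, 0::real)"
      by (rule norm_blinfun)
    also have "\<dots> \<le> M * norm ((z, U, s) - (z, U, 0)) * norm (h, 0::'a, 0::real)"
      using that by (intro mult_right_mono lipschitz on_S) auto
    also have "\<dots> = M * \<bar>s\<bar> * norm h"
      by (simp add: norm_Pair zero_prod_def)
    finally show "norm (q' z h) \<le> M * \<bar>s\<bar> * norm h" .
  qed
  ultimately have "norm (q a - q 0) \<le> M * \<bar>s\<bar> * norm (a - 0)"
    using differentiable_bound[OF convex_closed_segment] ends_in_segment by blast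
  then show ?thesis
    by (simp add: q_def mult_ac)
qed

locale curve_family =
  fixes Phi :: "real \<Rightarrow> 'a::real_normed_vector \<Rightarrow> real \<Rightarrow> 'a"
    and U0 :: 'a and \<delta> :: real and r0 :: 'a
  assumes radius_pos: "0 < \<delta>"
    and C2: "C2_on (\<lambda>(a, U, s). Phi a U s) (ball (0, U0, 0) \<delta>)"
    and through: "\<And>U s. dist U U0 < \<delta> \<Longrightarrow> 0 \<le> s \<Longrightarrow> s < \<delta> \<Longrightarrow> Phi 0 U s = U"
    and tangent: "((\<lambda>a. Phi a U0 0) has_vector_derivative r0) (at 0)"
begin

lemma origin_in_ball: "(0, U0, 0) \<in> ball (0, U0, 0) \<delta>"
  using radius_pos by simp

lemma ball_triple_memI:
  assumes "\<bar>a\<bar> < \<rho> / 3" "dist U U0 < \<rho> / 3" "\<bar>s\<bar> < \<rho> / 3"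
  shows "(a, U, s) \<in> ball (0, U0, 0) \<rho>"
proof -
  have "dist (a, U, s) (0, U0, 0) \<le> \<bar>a\<bar> + dist U U0 + \<bar>s\<bar>"
    using norm_triple_le[of a "U - U0" s] by (simp add: dist_norm)
  then show ?thesis using assms by (simp add: dist_commute)
qed

lemma derivative_at_origin:
  assumes "((\<lambda>(a, U, s). Phi a U s) has_derivative blinfun_apply D0) (at (0, U0, 0))"
  shows "D0 (h, V, 0) = h *\<^sub>R r0 + V"
proof -
  let ?F = "\<lambda>(a, U, s). Phi a U s"
  have "((\<lambda>a. (a, U0, 0::real)) has_derivative (\<lambda>h. (h, 0, 0))) (at 0)"
    by (auto intro!: derivative_eq_intros simp: zero_prod_def)
  from has_derivative_compose[OF this, of ?F] assms
  have "((\<lambda>a. ?F (a, U0, 0)) has_derivative (\<lambda>h. D0 (h, 0, 0))) (at 0)"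
    by simp
  moreover have "((\<lambda>a. ?F (a, U0, 0)) has_derivative (\<lambda>h. h *\<^sub>R r0)) (at 0)"
    using tangent by (simp add: has_vector_derivative_def)
  ultimately have "D0 (h, 0, 0) = h *\<^sub>R r0"
    by (metis has_derivative_unique)
  have "((\<lambda>U. (0::real, U, 0::real)) has_derivative (\<lambda>V. (0, V, 0))) (at U0)"
    by (auto intro!: derivative_eq_intros simp: zero_prod_def)
  from has_derivative_compose[OF this, of ?F] assms
  have "((\<lambda>U. ?F (0, U, 0)) has_derivative (\<lambda>V. D0 (0, V, 0))) (at U0)"
    by simp
  moreover have "((\<lambda>U. ?F (0, U, 0)) has_derivative (\<lambda>V. V)) (at U0)"
    by (rule has_derivative_transform_within_open[OF has_derivative_ident, of "ball U0 \<delta>"])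
       (use radius_pos through in \<open>auto simp: dist_commute\<close>)
  ultimately have "D0 (0, V, 0) = V"
    by (metis has_derivative_unique)
  have "D0 (h, V, 0) = D0 (h, 0, 0) + D0 (0, V, 0)"
    by (simp flip: blinfun.add_right)
  then show ?thesis
    using \<open>D0 (h, 0, 0) = h *\<^sub>R r0\<close> \<open>D0 (0, V, 0) = V\<close> by simp
qed

lemma C2_derivatives:
  obtains D D2 where
    "\<And>x. x \<in> ball (0, U0, 0) \<delta> \<Longrightarrow> ((\<lambda>(a, U, s). Phi a U s) has_derivative blinfun_apply (D x)) (at x)"
    "\<And>x. x \<in> ball (0, U0, 0) \<delta> \<Longrightarrow> (D has_derivative blinfun_apply (D2 x)) (at x)"
    "\<And>x. x \<in> ball (0, U0, 0) \<delta> \<Longrightarrow> isCont D2 x"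
  using C2_on_openE[OF C2 open_ball] by blast

lemma continuous_at_origin:
  assumes "e > 0"
  obtains \<rho> where "\<rho> > 0"
    and "\<And>a U s. \<bar>a\<bar> < \<rho> \<Longrightarrow> dist U U0 < \<rho> \<Longrightarrow> \<bar>s\<bar> < \<rho> \<Longrightarrow> dist (Phi a U s) U0 < e"
proof -
  let ?F = "\<lambda>(a, U, s). Phi a U s"
  obtain D where "(?F has_derivative blinfun_apply D) (at (0, U0, 0))"
    using C2_derivatives origin_in_ball by metis
  then have "isCont ?F (0, U0, 0)"
    by (rule has_derivative_continuous)
  moreover have "?F (0, U0, 0) = U0"
    using through radius_pos by simp
  ultimately obtain \<rho> where "\<rho> > 0" and \<rho>: "\<And>x. dist x (0, U0, 0) < \<rho> \<Longrightarrow> dist (?F x) U0 < e"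
    using \<open>e > 0\<close> unfolding continuous_at_eps_delta by metis
  show thesis
  proof (rule that[of "\<rho> / 3"])
    fix a U s assume "\<bar>a\<bar> < \<rho> / 3" "dist U U0 < \<rho> / 3" "\<bar>s\<bar> < \<rho> / 3"
    then have "(a, U, s) \<in> ball (0, U0, 0) \<rho>"
      by (rule ball_triple_memI)
    then show "dist (Phi a U s) U0 < e"
      using \<rho>[of "(a, U, s)"] by (simp add: dist_commute)
  qed (use \<open>\<rho> > 0\<close> in simp)
qed

lemma linear_approximation:
  assumes "\<eta> > 0"
  obtains \<rho> where "\<rho> > 0"
    and "\<And>a b U V. \<bar>a\<bar> < \<rho> \<Longrightarrow> \<bar>b\<bar> < \<rho> \<Longrightarrow> dist U U0 < \<rho> \<Longrightarrow> dist V U0 < \<rho> \<Longrightarrow>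
      norm (Phi a U 0 - Phi b V 0 - ((a - b) *\<^sub>R r0 + (U - V))) \<le> \<eta> * (\<bar>a - b\<bar> + norm (U - V))"
proof -
  let ?F = "\<lambda>(a, U, s). Phi a U s"
  obtain D D2 where D: "\<And>x. x \<in> ball (0, U0, 0) \<delta> \<Longrightarrow> (?F has_derivative blinfun_apply (D x)) (at x)"
    and D2: "\<And>x. x \<in> ball (0, U0, 0) \<delta> \<Longrightarrow> (D has_derivative blinfun_apply (D2 x)) (at x)"
    using C2_derivatives by metis
  have "isCont D (0, U0, 0)"
    using D2[OF origin_in_ball] by (rule has_derivative_continuous)
  then obtain \<rho> where "\<rho> > 0" and lin: "\<And>x y. x \<in> ball (0, U0, 0) \<rho> \<Longrightarrow> y \<in> ball (0, U0, 0) \<rho> \<Longrightarrow>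
      norm (?F x - ?F y - D (0, U0, 0) (x - y)) \<le> \<eta> * norm (x - y)"
    using linearization_error_small[OF open_ball origin_in_ball D _ assms] by blast
  show thesis
  proof (rule that[of "\<rho> / 3"])
    fix a b U V
    assume "\<bar>a\<bar> < \<rho> / 3" "\<bar>b\<bar> < \<rho> / 3" "dist U U0 < \<rho> / 3" "dist V U0 < \<rho> / 3"
    then have "norm (Phi a U 0 - Phi b V 0 - D (0, U0, 0) (a - b, U - V, 0)) \<le> \<eta> * norm (a - b, U - V, 0::real)"
      using lin[OF ball_triple_memI ball_triple_memI, of a U 0 b V 0] \<open>\<rho> > 0\<close> by simp
    also have "\<dots> \<le> \<eta> * (\<bar>a - b\<bar> + norm (U - V))"
      using norm_triple_le[of "a - b" "U - V" "0::real"] assms by simp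
    finally show "norm (Phi a U 0 - Phi b V 0 - ((a - b) *\<^sub>R r0 + (U - V))) \<le> \<eta> * (\<bar>a - b\<bar> + norm (U - V))"
      by (simp add: derivative_at_origin[OF D[OF origin_in_ball]])
  qed (use \<open>\<rho> > 0\<close> in simp)
qed

lemma state_lipschitz:
  obtains \<rho> where "\<rho> > 0"
    and "\<And>a U V. \<bar>a\<bar> < \<rho> \<Longrightarrow> dist U U0 < \<rho> \<Longrightarrow> dist V U0 < \<rho> \<Longrightarrow>
      norm (Phi a U 0 - Phi a V 0) \<le> 2 * norm (U - V)"
proof -
  obtain \<rho> where "\<rho> > 0" and lin: "\<And>a b U V. \<bar>a\<bar> < \<rho> \<Longrightarrow> \<bar>b\<bar> < \<rho> \<Longrightarrow> dist U U0 < \<rho> \<Longrightarrow>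
      dist V U0 < \<rho> \<Longrightarrow> norm (Phi a U 0 - Phi b V 0 - ((a - b) *\<^sub>R r0 + (U - V))) \<le> 1 * (\<bar>a - b\<bar> + norm (U - V))"
    using linear_approximation[OF zero_less_one] by blast
  show thesis
  proof (rule that[OF \<open>\<rho> > 0\<close>])
    fix a U V assume "\<bar>a\<bar> < \<rho>" "dist U U0 < \<rho>" "dist V U0 < \<rho>"
    then have "norm (Phi a U 0 - Phi a V 0 - (U - V)) \<le> norm (U - V)"
      using lin[of a a U V] by simp
    then show "norm (Phi a U 0 - Phi a V 0) \<le> 2 * norm (U - V)"
      using norm_triangle_ineq[of "Phi a U 0 - Phi a V 0 - (U - V)" "U - V"] by simp
  qed
qed

lemma derivative_lipschitz_near:
  obtains \<rho> M D where "0 < \<rho>" "\<rho> \<le> \<delta>" "M \<ge> 0"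
    and "\<And>x. x \<in> ball (0, U0, 0) \<rho> \<Longrightarrow> ((\<lambda>(a, U, s). Phi a U s) has_derivative blinfun_apply (D x)) (at x)"
    and "\<And>x y. x \<in> ball (0, U0, 0) \<rho> \<Longrightarrow> y \<in> ball (0, U0, 0) \<rho> \<Longrightarrow> norm (D x - D y) \<le> M * norm (x - y)"
proof -
  obtain D D2 where D: "\<And>x. x \<in> ball (0, U0, 0) \<delta> \<Longrightarrow> ((\<lambda>(a, U, s). Phi a U s) has_derivative blinfun_apply (D x)) (at x)"
    and D2: "\<And>x. x \<in> ball (0, U0, 0) \<delta> \<Longrightarrow> (D has_derivative blinfun_apply (D2 x)) (at x)"
    and "\<And>x. x \<in> ball (0, U0, 0) \<delta> \<Longrightarrow> isCont D2 x"
    using C2_derivatives by metis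
  then obtain \<rho> M where "\<rho> > 0" "M \<ge> 0"
    and "\<And>x y. x \<in> ball (0, U0, 0) \<rho> \<Longrightarrow> y \<in> ball (0, U0, 0) \<rho> \<Longrightarrow> norm (D x - D y) \<le> M * norm (x - y)"
    using continuous_derivative_imp_lipschitz_near[OF open_ball origin_in_ball D2] origin_in_ball by blast
  then show thesis
    using that[of "min \<rho> \<delta>" M D] radius_pos D by auto
qed

lemma perturbation_bound:
  obtains \<rho> K where "\<rho> > 0" and "K \<ge> 0"
    and "\<And>a U s. \<bar>a\<bar> < \<rho> \<Longrightarrow> dist U U0 < \<rho> \<Longrightarrow> 0 \<le> s \<Longrightarrow> s < \<rho> \<Longrightarrow>
      norm (Phi a U s - Phi a U 0) \<le> K * \<bar>a\<bar> * s"
proof -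
  obtain \<rho> M D where "0 < \<rho>" "\<rho> \<le> \<delta>" "M \<ge> 0"
    and D: "\<And>x. x \<in> ball (0, U0, 0) \<rho> \<Longrightarrow> ((\<lambda>(a, U, s). Phi a U s) has_derivative blinfun_apply (D x)) (at x)"
    and lipschitz: "\<And>x y. x \<in> ball (0, U0, 0) \<rho> \<Longrightarrow> y \<in> ball (0, U0, 0) \<rho> \<Longrightarrow> norm (D x - D y) \<le> M * norm (x - y)"
    using derivative_lipschitz_near by blast
  show thesis
  proof (rule that[of "\<rho> / 3" M])
    show "\<rho> / 3 > 0" "M \<ge> 0"
      using \<open>0 < \<rho>\<close> \<open>M \<ge> 0\<close> by auto
    fix a U s assume small: "\<bar>a\<bar> < \<rho> / 3" "dist U U0 < \<rho> / 3" "0 \<le> s" "s < \<rho> / 3"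
    let ?B = "ball (0::real, U0, 0::real) \<rho>"
    have corners: "(0, U, 0) \<in> ?B" "(a, U, 0) \<in> ?B" "(0, U, s) \<in> ?B" "(a, U, s) \<in> ?B"
      using small \<open>0 < \<rho>\<close> by (auto intro!: ball_triple_memI simp del: mem_ball)
    from mixed_difference_bound[OF convex_ball D lipschitz corners]
    have "norm (Phi a U s - Phi a U 0 - (Phi 0 U s - Phi 0 U 0)) \<le> M * \<bar>a\<bar> * \<bar>s\<bar>"
      by simp
    moreover have "Phi 0 U s = U" "Phi 0 U 0 = U"
      using through small \<open>\<rho> \<le> \<delta>\<close> by auto
    ultimately show "norm (Phi a U s - Phi a U 0) \<le> M * \<bar>a\<bar> * s"
      using \<open>0 \<le> s\<close> by simp
  qed
qed

end

lemma eigenvectors_independent: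
  fixes L :: "'a::real_vector \<Rightarrow> 'a"
  assumes "linear L" and "L a = l1 *\<^sub>R a" "L b = l2 *\<^sub>R b" and "a \<noteq> 0" "b \<noteq> 0" "l1 \<noteq> l2"
    and combination: "x1 *\<^sub>R a + x2 *\<^sub>R b = 0"
  shows "x1 = 0 \<and> x2 = 0"
proof -
  have image: "L (x1 *\<^sub>R a + x2 *\<^sub>R b) = (x1 * l1) *\<^sub>R a + (x2 * l2) *\<^sub>R b"
    using assms(1-3) by (simp add: linear_add linear_scale)
  have "(x1 * (l1 - l2)) *\<^sub>R a = ((x1 * l1) *\<^sub>R a + (x2 * l2) *\<^sub>R b) - l2 *\<^sub>R (x1 *\<^sub>R a + x2 *\<^sub>R b)"
    by (simp add: algebra_simps)
  also have "\<dots> = 0"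
    using image combination linear_0[OF \<open>linear L\<close>] by simp
  finally have "x1 = 0"
    using combination \<open>a \<noteq> 0\<close> \<open>l1 \<noteq> l2\<close> by simp
  then show ?thesis
    using combination \<open>b \<noteq> 0\<close> by simp
qed

lemma independent_pair_coefficient_bound:
  fixes a b :: "'a::euclidean_space"
  assumes "\<And>x1 x2. x1 *\<^sub>R a + x2 *\<^sub>R b = 0 \<Longrightarrow> x1 = 0 \<and> x2 = 0"
  obtains K where "K > 0" and "\<And>x1 x2. \<bar>x1\<bar> + \<bar>x2\<bar> \<le> K * norm (x1 *\<^sub>R a + x2 *\<^sub>R b)"
proof -
  let ?f = "\<lambda>x :: real \<times> real. fst x *\<^sub>R a + snd x *\<^sub>R b"
  have "bounded_linear ?f"
    by (auto intro!: bounded_linear_intros)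
  moreover have "\<forall>x\<in>UNIV. ?f x = 0 \<longrightarrow> x = 0"
    using assms by (simp add: prod_eq_iff)
  ultimately obtain e where "e > 0" and e: "\<And>x. e * norm x \<le> norm (?f x)"
    using injective_imp_isometric[OF closed_UNIV subspace_UNIV] by blast
  show thesis
  proof (rule that[of "2 / e"])
    fix x1 x2 :: real
    have "\<bar>x1\<bar> + \<bar>x2\<bar> \<le> 2 * norm (x1, x2)"
      using norm_fst_le[of x1 x2] norm_snd_le[of x2 x1] by simp
    also have "\<dots> \<le> 2 / e * norm (x1 *\<^sub>R a + x2 *\<^sub>R b)"
      using e[of "(x1, x2)"] \<open>e > 0\<close> by (simp add: field_simps)
    finally show "\<bar>x1\<bar> + \<bar>x2\<bar> \<le> 2 / e * norm (x1 *\<^sub>R a + x2 *\<^sub>R b)" .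
  qed (use \<open>e > 0\<close> in simp)
qed

lemma composite_perturbation_bound:
  assumes "curve_family Phi1 U0 \<delta>1 a" and "curve_family Phi2 U0 \<delta>2 b"
  obtains \<epsilon> K where "\<epsilon> > 0" and "K \<ge> 0"
    and "\<And>UL \<alpha>1 \<alpha>2 s. dist UL U0 < \<epsilon> \<Longrightarrow> \<bar>\<alpha>1\<bar> < \<epsilon> \<Longrightarrow> \<bar>\<alpha>2\<bar> < \<epsilon> \<Longrightarrow> 0 \<le> s \<Longrightarrow> s < \<epsilon> \<Longrightarrow>
      norm (Phi2 \<alpha>2 (Phi1 \<alpha>1 UL s) s - Phi2 \<alpha>2 (Phi1 \<alpha>1 UL 0) 0) \<le> K * (\<bar>\<alpha>1\<bar> + \<bar>\<alpha>2\<bar>) * s"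
proof -
  interpret c1: curve_family Phi1 U0 \<delta>1 a by fact
  interpret c2: curve_family Phi2 U0 \<delta>2 b by fact
  obtain \<rho>1 K1 where "\<rho>1 > 0" "K1 \<ge> 0" and par1: "\<And>\<alpha> U s. \<bar>\<alpha>\<bar> < \<rho>1 \<Longrightarrow> dist U U0 < \<rho>1 \<Longrightarrow>
      0 \<le> s \<Longrightarrow> s < \<rho>1 \<Longrightarrow> norm (Phi1 \<alpha> U s - Phi1 \<alpha> U 0) \<le> K1 * \<bar>\<alpha>\<bar> * s"
    using c1.perturbation_bound by blast
  obtain \<rho>2 K2 where "\<rho>2 > 0" "K2 \<ge> 0" and par2: "\<And>\<alpha> U s. \<bar>\<alpha>\<bar> < \<rho>2 \<Longrightarrow> dist U U0 < \<rho>2 \<Longrightarrow>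
      0 \<le> s \<Longrightarrow> s < \<rho>2 \<Longrightarrow> norm (Phi2 \<alpha> U s - Phi2 \<alpha> U 0) \<le> K2 * \<bar>\<alpha>\<bar> * s"
    using c2.perturbation_bound by blast
  obtain \<rho>3 where "\<rho>3 > 0" and lip2: "\<And>\<alpha> U V. \<bar>\<alpha>\<bar> < \<rho>3 \<Longrightarrow> dist U U0 < \<rho>3 \<Longrightarrow> dist V U0 < \<rho>3 \<Longrightarrow>
      norm (Phi2 \<alpha> U 0 - Phi2 \<alpha> V 0) \<le> 2 * norm (U - V)"
    using c2.state_lipschitz by blast
  obtain \<rho>4 where "\<rho>4 > 0" and near: "\<And>\<alpha> U s. \<bar>\<alpha>\<bar> < \<rho>4 \<Longrightarrow> dist U U0 < \<rho>4 \<Longrightarrow> \<bar>s\<bar> < \<rho>4 \<Longrightarrow>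
      dist (Phi1 \<alpha> U s) U0 < min \<rho>2 \<rho>3"
    using c1.continuous_at_origin[of "min \<rho>2 \<rho>3"] \<open>\<rho>2 > 0\<close> \<open>\<rho>3 > 0\<close> by auto
  define \<epsilon> where "\<epsilon> = min (min \<rho>1 \<rho>2) (min \<rho>3 \<rho>4)"
  show thesis
  proof (rule that[of \<epsilon> "K2 + 2 * K1"])
    show "\<epsilon> > 0" "K2 + 2 * K1 \<ge> 0"
      using \<open>\<rho>1 > 0\<close> \<open>\<rho>2 > 0\<close> \<open>\<rho>3 > 0\<close> \<open>\<rho>4 > 0\<close> \<open>K1 \<ge> 0\<close> \<open>K2 \<ge> 0\<close> by (auto simp: \<epsilon>_def)
    fix UL \<alpha>1 \<alpha>2 s
    assume small: "dist UL U0 < \<epsilon>" "\<bar>\<alpha>1\<bar> < \<epsilon>" "\<bar>\<alpha>2\<bar> < \<epsilon>" "0 \<le> s" "s < \<epsilon>"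
    define Vs V0 where "Vs = Phi1 \<alpha>1 UL s" and "V0 = Phi1 \<alpha>1 UL 0"
    have "dist Vs U0 < min \<rho>2 \<rho>3" "dist V0 U0 < min \<rho>2 \<rho>3"
      using near small by (auto simp: Vs_def V0_def \<epsilon>_def)
    then have "norm (Phi2 \<alpha>2 Vs s - Phi2 \<alpha>2 Vs 0) \<le> K2 * \<bar>\<alpha>2\<bar> * s"
      and "norm (Phi2 \<alpha>2 Vs 0 - Phi2 \<alpha>2 V0 0) \<le> 2 * norm (Vs - V0)"
      using par2 lip2 small by (auto simp: \<epsilon>_def)
    moreover have "norm (Vs - V0) \<le> K1 * \<bar>\<alpha>1\<bar> * s"
      using par1 small by (auto simp: Vs_def V0_def \<epsilon>_def)
    ultimately have "norm (Phi2 \<alpha>2 Vs s - Phi2 \<alpha>2 V0 0) \<le> K2 * \<bar>\<alpha>2\<bar> * s + 2 * (K1 * \<bar>\<alpha>1\<bar> * s)"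
      using norm_triangle_ineq[of "Phi2 \<alpha>2 Vs s - Phi2 \<alpha>2 Vs 0" "Phi2 \<alpha>2 Vs 0 - Phi2 \<alpha>2 V0 0"] by simp
    also have "\<dots> \<le> (K2 + 2 * K1) * (\<bar>\<alpha>1\<bar> + \<bar>\<alpha>2\<bar>) * s"
      using \<open>K1 \<ge> 0\<close> \<open>K2 \<ge> 0\<close> \<open>0 \<le> s\<close> by (simp add: algebra_simps)
    finally show "norm (Phi2 \<alpha>2 (Phi1 \<alpha>1 UL s) s - Phi2 \<alpha>2 (Phi1 \<alpha>1 UL 0) 0) \<le> (K2 + 2 * K1) * (\<bar>\<alpha>1\<bar> + \<bar>\<alpha>2\<bar>) * s"
      by (simp add: Vs_def V0_def)
  qed
qed

lemma composite_linearization: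
  assumes "curve_family Phi1 U0 \<delta>1 a" and "curve_family Phi2 U0 \<delta>2 b" and "\<eta> > 0"
  obtains \<epsilon> where "\<epsilon> > 0"
    and "\<And>UL \<alpha>1 \<alpha>2 \<beta>1 \<beta>2. dist UL U0 < \<epsilon> \<Longrightarrow> \<bar>\<alpha>1\<bar> < \<epsilon> \<Longrightarrow> \<bar>\<alpha>2\<bar> < \<epsilon> \<Longrightarrow> \<bar>\<beta>1\<bar> < \<epsilon> \<Longrightarrow> \<bar>\<beta>2\<bar> < \<epsilon> \<Longrightarrow>
      norm (Phi2 \<beta>2 (Phi1 \<beta>1 UL 0) 0 - Phi2 \<alpha>2 (Phi1 \<alpha>1 UL 0) 0 - ((\<beta>1 - \<alpha>1) *\<^sub>R a + (\<beta>2 - \<alpha>2) *\<^sub>R b))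
        \<le> \<eta> * (\<bar>\<beta>1 - \<alpha>1\<bar> + \<bar>\<beta>2 - \<alpha>2\<bar>)"
proof -
  interpret c1: curve_family Phi1 U0 \<delta>1 a by fact
  interpret c2: curve_family Phi2 U0 \<delta>2 b by fact
  define \<eta>' where "\<eta>' = min 1 (\<eta> / (2 + norm a))"
  have "2 + norm a > 0"
    using norm_ge_zero[of a] by linarith
  then have "\<eta>' > 0" "\<eta>' \<le> 1" "\<eta>' * (2 + norm a) \<le> \<eta>"
    using \<open>\<eta> > 0\<close> by (auto simp: \<eta>'_def pos_le_divide_eq[symmetric])
  obtain \<rho>1 where "\<rho>1 > 0" and lin1: "\<And>\<alpha> \<beta> U V. \<bar>\<alpha>\<bar> < \<rho>1 \<Longrightarrow> \<bar>\<beta>\<bar> < \<rho>1 \<Longrightarrow> dist U U0 < \<rho>1 \<Longrightarrow>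
      dist V U0 < \<rho>1 \<Longrightarrow> norm (Phi1 \<alpha> U 0 - Phi1 \<beta> V 0 - ((\<alpha> - \<beta>) *\<^sub>R a + (U - V))) \<le> \<eta>' * (\<bar>\<alpha> - \<beta>\<bar> + norm (U - V))"
    using c1.linear_approximation[OF \<open>\<eta>' > 0\<close>] by blast
  obtain \<rho>2 where "\<rho>2 > 0" and lin2: "\<And>\<alpha> \<beta> U V. \<bar>\<alpha>\<bar> < \<rho>2 \<Longrightarrow> \<bar>\<beta>\<bar> < \<rho>2 \<Longrightarrow> dist U U0 < \<rho>2 \<Longrightarrow>
      dist V U0 < \<rho>2 \<Longrightarrow> norm (Phi2 \<alpha> U 0 - Phi2 \<beta> V 0 - ((\<alpha> - \<beta>) *\<^sub>R b + (U - V))) \<le> \<eta>' * (\<bar>\<alpha> - \<beta>\<bar> + norm (U - V))"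
    using c2.linear_approximation[OF \<open>\<eta>' > 0\<close>] by blast
  obtain \<rho>3 where "\<rho>3 > 0" and near: "\<And>\<alpha> U s. \<bar>\<alpha>\<bar> < \<rho>3 \<Longrightarrow> dist U U0 < \<rho>3 \<Longrightarrow> \<bar>s\<bar> < \<rho>3 \<Longrightarrow>
      dist (Phi1 \<alpha> U s) U0 < \<rho>2"
    using c1.continuous_at_origin[OF \<open>\<rho>2 > 0\<close>] by blast
  define \<epsilon> where "\<epsilon> = min \<rho>1 (min \<rho>2 \<rho>3)"
  show thesis
  proof (rule that[of \<epsilon>])
    show "\<epsilon> > 0"
      using \<open>\<rho>1 > 0\<close> \<open>\<rho>2 > 0\<close> \<open>\<rho>3 > 0\<close> by (simp add: \<epsilon>_def)
    fix UL \<alpha>1 \<alpha>2 \<beta>1 \<beta>2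
    assume small: "dist UL U0 < \<epsilon>" "\<bar>\<alpha>1\<bar> < \<epsilon>" "\<bar>\<alpha>2\<bar> < \<epsilon>" "\<bar>\<beta>1\<bar> < \<epsilon>" "\<bar>\<beta>2\<bar> < \<epsilon>"
    define x1 x2 where "x1 = \<beta>1 - \<alpha>1" and "x2 = \<beta>2 - \<alpha>2"
    define Va Vb where "Va = Phi1 \<alpha>1 UL 0" and "Vb = Phi1 \<beta>1 UL 0"
    define \<Delta> where "\<Delta> = Phi2 \<beta>2 Vb 0 - Phi2 \<alpha>2 Va 0"
    have step1: "norm (Vb - Va - x1 *\<^sub>R a) \<le> \<eta>' * \<bar>x1\<bar>"
      using lin1[of \<beta>1 \<alpha>1 UL UL] small by (simp add: Va_def Vb_def x1_def \<epsilon>_def)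
    have "dist Va U0 < \<rho>2" "dist Vb U0 < \<rho>2"
      using near small \<open>\<rho>3 > 0\<close> by (auto simp: Va_def Vb_def \<epsilon>_def)
    then have step2: "norm (\<Delta> - (x2 *\<^sub>R b + (Vb - Va))) \<le> \<eta>' * (\<bar>x2\<bar> + norm (Vb - Va))"
      using lin2[of \<beta>2 \<alpha>2 Vb Va] small by (simp add: \<Delta>_def x2_def \<epsilon>_def)
    have "norm (Vb - Va) \<le> norm (x1 *\<^sub>R a) + \<eta>' * \<bar>x1\<bar>"
      using step1 norm_triangle_ineq[of "x1 *\<^sub>R a" "Vb - Va - x1 *\<^sub>R a"] by simp
    also have "\<dots> \<le> (norm a + 1) * \<bar>x1\<bar>"
      using mult_right_mono[OF \<open>\<eta>' \<le> 1\<close> abs_ge_zero[of x1]] by (simp add: algebra_simps)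
    finally have "\<eta>' * (\<bar>x2\<bar> + norm (Vb - Va)) \<le> \<eta>' * (\<bar>x2\<bar> + (norm a + 1) * \<bar>x1\<bar>)"
      using \<open>\<eta>' > 0\<close> by simp
    moreover have "norm (\<Delta> - (x1 *\<^sub>R a + x2 *\<^sub>R b))
        \<le> norm (\<Delta> - (x2 *\<^sub>R b + (Vb - Va))) + norm (Vb - Va - x1 *\<^sub>R a)"
      using norm_triangle_ineq[of "\<Delta> - (x2 *\<^sub>R b + (Vb - Va))" "Vb - Va - x1 *\<^sub>R a"]
      by (simp add: algebra_simps)
    ultimately have "norm (\<Delta> - (x1 *\<^sub>R a + x2 *\<^sub>R b)) \<le> \<eta>' * (\<bar>x2\<bar> + (norm a + 1) * \<bar>x1\<bar>) + \<eta>' * \<bar>x1\<bar>"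
      using step1 step2 by linarith
    also have "\<dots> \<le> \<eta>' * (2 + norm a) * (\<bar>x1\<bar> + \<bar>x2\<bar>)"
      using \<open>\<eta>' > 0\<close> by (simp add: algebra_simps)
    also have "\<dots> \<le> \<eta> * (\<bar>x1\<bar> + \<bar>x2\<bar>)"
      using \<open>\<eta>' * (2 + norm a) \<le> \<eta>\<close> by (simp add: mult_right_mono)
    finally show "norm (Phi2 \<beta>2 (Phi1 \<beta>1 UL 0) 0 - Phi2 \<alpha>2 (Phi1 \<alpha>1 UL 0) 0 - ((\<beta>1 - \<alpha>1) *\<^sub>R a + (\<beta>2 - \<alpha>2) *\<^sub>R b))
        \<le> \<eta> * (\<bar>\<beta>1 - \<alpha>1\<bar> + \<bar>\<beta>2 - \<alpha>2\<bar>)"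
      by (simp add: x1_def x2_def \<Delta>_def Va_def Vb_def)
  qed
qed

lemma composite_inverse_lipschitz:
  fixes Phi1 Phi2 :: "real \<Rightarrow> 'a::euclidean_space \<Rightarrow> real \<Rightarrow> 'a"
  assumes "curve_family Phi1 U0 \<delta>1 a" and "curve_family Phi2 U0 \<delta>2 b"
    and independent: "\<And>x1 x2. x1 *\<^sub>R a + x2 *\<^sub>R b = 0 \<Longrightarrow> x1 = 0 \<and> x2 = 0"
  obtains \<epsilon> K where "\<epsilon> > 0" and "K \<ge> 0"
    and "\<And>UL \<alpha>1 \<alpha>2 \<beta>1 \<beta>2. dist UL U0 < \<epsilon> \<Longrightarrow> \<bar>\<alpha>1\<bar> < \<epsilon> \<Longrightarrow> \<bar>\<alpha>2\<bar> < \<epsilon> \<Longrightarrow> \<bar>\<beta>1\<bar> < \<epsilon> \<Longrightarrow> \<bar>\<beta>2\<bar> < \<epsilon> \<Longrightarrow>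
      \<bar>\<beta>1 - \<alpha>1\<bar> + \<bar>\<beta>2 - \<alpha>2\<bar> \<le> K * norm (Phi2 \<beta>2 (Phi1 \<beta>1 UL 0) 0 - Phi2 \<alpha>2 (Phi1 \<alpha>1 UL 0) 0)"
proof -
  obtain K0 where "K0 > 0" and coefficients: "\<And>x1 x2. \<bar>x1\<bar> + \<bar>x2\<bar> \<le> K0 * norm (x1 *\<^sub>R a + x2 *\<^sub>R b)"
    using independent_pair_coefficient_bound[OF independent] by blast
  then obtain \<epsilon> where "\<epsilon> > 0" and linearization: "\<And>UL \<alpha>1 \<alpha>2 \<beta>1 \<beta>2. dist UL U0 < \<epsilon> \<Longrightarrow>
      \<bar>\<alpha>1\<bar> < \<epsilon> \<Longrightarrow> \<bar>\<alpha>2\<bar> < \<epsilon> \<Longrightarrow> \<bar>\<beta>1\<bar> < \<epsilon> \<Longrightarrow> \<bar>\<beta>2\<bar> < \<epsilon> \<Longrightarrow>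
      norm (Phi2 \<beta>2 (Phi1 \<beta>1 UL 0) 0 - Phi2 \<alpha>2 (Phi1 \<alpha>1 UL 0) 0 - ((\<beta>1 - \<alpha>1) *\<^sub>R a + (\<beta>2 - \<alpha>2) *\<^sub>R b))
        \<le> 1 / (2 * K0) * (\<bar>\<beta>1 - \<alpha>1\<bar> + \<bar>\<beta>2 - \<alpha>2\<bar>)"
    using composite_linearization[OF assms(1,2), of "1 / (2 * K0)"] by auto
  show thesis
  proof (rule that[OF \<open>\<epsilon> > 0\<close>, of "2 * K0"])
    show "2 * K0 \<ge> 0"
      using \<open>K0 > 0\<close> by simp
    fix UL \<alpha>1 \<alpha>2 \<beta>1 \<beta>2
    assume "dist UL U0 < \<epsilon>" "\<bar>\<alpha>1\<bar> < \<epsilon>" "\<bar>\<alpha>2\<bar> < \<epsilon>" "\<bar>\<beta>1\<bar> < \<epsilon>" "\<bar>\<beta>2\<bar> < \<epsilon>"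
    define X w \<Delta> where "X = \<bar>\<beta>1 - \<alpha>1\<bar> + \<bar>\<beta>2 - \<alpha>2\<bar>"
      and "w = (\<beta>1 - \<alpha>1) *\<^sub>R a + (\<beta>2 - \<alpha>2) *\<^sub>R b"
      and "\<Delta> = Phi2 \<beta>2 (Phi1 \<beta>1 UL 0) 0 - Phi2 \<alpha>2 (Phi1 \<alpha>1 UL 0) 0"
    have "norm w \<le> norm \<Delta> + 1 / (2 * K0) * X"
      using linearization[OF \<open>dist UL U0 < \<epsilon>\<close>, of \<alpha>1 \<alpha>2 \<beta>1 \<beta>2]
        norm_triangle_ineq2[of w \<Delta>] norm_minus_commute[of w \<Delta>]
        \<open>\<bar>\<alpha>1\<bar> < \<epsilon>\<close> \<open>\<bar>\<alpha>2\<bar> < \<epsilon>\<close> \<open>\<bar>\<beta>1\<bar> < \<epsilon>\<close> \<open>\<bar>\<beta>2\<bar> < \<epsilon>\<close>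
      unfolding X_def w_def \<Delta>_def by linarith
    then have "K0 * norm w \<le> K0 * (norm \<Delta> + 1 / (2 * K0) * X)"
      using \<open>K0 > 0\<close> by (simp add: mult_left_mono)
    also have "\<dots> = K0 * norm \<Delta> + X / 2"
      using \<open>K0 > 0\<close> by (simp add: field_simps)
    finally have "X \<le> K0 * norm \<Delta> + X / 2"
      using coefficients[of "\<beta>1 - \<alpha>1" "\<beta>2 - \<alpha>2"] unfolding X_def w_def by linarith
    then show "\<bar>\<beta>1 - \<alpha>1\<bar> + \<bar>\<beta>2 - \<alpha>2\<bar> \<le> 2 * K0 * norm (Phi2 \<beta>2 (Phi1 \<beta>1 UL 0) 0 - Phi2 \<alpha>2 (Phi1 \<alpha>1 UL 0) 0)"
      unfolding X_def \<Delta>_def by (simp add: field_simps)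
  qed
qed

lemma composite_stability:
  fixes Phi1 Phi2 :: "real \<Rightarrow> 'a::euclidean_space \<Rightarrow> real \<Rightarrow> 'a"
  assumes "curve_family Phi1 U0 \<delta>1 a" and "curve_family Phi2 U0 \<delta>2 b"
    and "\<And>x1 x2. x1 *\<^sub>R a + x2 *\<^sub>R b = 0 \<Longrightarrow> x1 = 0 \<and> x2 = 0"
  obtains \<epsilon> C where "\<epsilon> > 0" and "C > 0"
    and "\<And>UL \<alpha>1 \<alpha>2 \<beta>1 \<beta>2 s. dist UL U0 < \<epsilon> \<Longrightarrow> \<bar>\<alpha>1\<bar> < \<epsilon> \<Longrightarrow> \<bar>\<alpha>2\<bar> < \<epsilon> \<Longrightarrow> \<bar>\<beta>1\<bar> < \<epsilon> \<Longrightarrow> \<bar>\<beta>2\<bar> < \<epsilon> \<Longrightarrow>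
      0 \<le> s \<Longrightarrow> s < \<epsilon> \<Longrightarrow>
      \<bar>\<beta>1 - \<alpha>1\<bar> + \<bar>\<beta>2 - \<alpha>2\<bar> \<le> C * (\<bar>\<alpha>1\<bar> + \<bar>\<alpha>2\<bar>) * s
        + C * norm (Phi2 \<beta>2 (Phi1 \<beta>1 UL 0) 0 - Phi2 \<alpha>2 (Phi1 \<alpha>1 UL s) s)"
proof -
  obtain \<epsilon>1 K where "\<epsilon>1 > 0" "K \<ge> 0" and lower: "\<And>UL \<alpha>1 \<alpha>2 \<beta>1 \<beta>2. dist UL U0 < \<epsilon>1 \<Longrightarrow>
      \<bar>\<alpha>1\<bar> < \<epsilon>1 \<Longrightarrow> \<bar>\<alpha>2\<bar> < \<epsilon>1 \<Longrightarrow> \<bar>\<beta>1\<bar> < \<epsilon>1 \<Longrightarrow> \<bar>\<beta>2\<bar> < \<epsilon>1 \<Longrightarrow>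
      \<bar>\<beta>1 - \<alpha>1\<bar> + \<bar>\<beta>2 - \<alpha>2\<bar> \<le> K * norm (Phi2 \<beta>2 (Phi1 \<beta>1 UL 0) 0 - Phi2 \<alpha>2 (Phi1 \<alpha>1 UL 0) 0)"
    using composite_inverse_lipschitz[OF assms] by blast
  obtain \<epsilon>2 K' where "\<epsilon>2 > 0" "K' \<ge> 0" and perturbation: "\<And>UL \<alpha>1 \<alpha>2 s. dist UL U0 < \<epsilon>2 \<Longrightarrow>
      \<bar>\<alpha>1\<bar> < \<epsilon>2 \<Longrightarrow> \<bar>\<alpha>2\<bar> < \<epsilon>2 \<Longrightarrow> 0 \<le> s \<Longrightarrow> s < \<epsilon>2 \<Longrightarrow>
      norm (Phi2 \<alpha>2 (Phi1 \<alpha>1 UL s) s - Phi2 \<alpha>2 (Phi1 \<alpha>1 UL 0) 0) \<le> K' * (\<bar>\<alpha>1\<bar> + \<bar>\<alpha>2\<bar>) * s"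
    using composite_perturbation_bound[OF assms(1,2)] by blast
  show thesis
  proof (rule that[of "min \<epsilon>1 \<epsilon>2" "1 + K + K * K'"])
    show "min \<epsilon>1 \<epsilon>2 > 0" "1 + K + K * K' > 0"
      using \<open>\<epsilon>1 > 0\<close> \<open>\<epsilon>2 > 0\<close> \<open>K \<ge> 0\<close> mult_nonneg_nonneg[OF \<open>K \<ge> 0\<close> \<open>K' \<ge> 0\<close>] by auto
    fix UL \<alpha>1 \<alpha>2 \<beta>1 \<beta>2 s
    assume small: "dist UL U0 < min \<epsilon>1 \<epsilon>2" "\<bar>\<alpha>1\<bar> < min \<epsilon>1 \<epsilon>2" "\<bar>\<alpha>2\<bar> < min \<epsilon>1 \<epsilon>2"
      "\<bar>\<beta>1\<bar> < min \<epsilon>1 \<epsilon>2" "\<bar>\<beta>2\<bar> < min \<epsilon>1 \<epsilon>2" "0 \<le> s" "s < min \<epsilon>1 \<epsilon>2"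
    define A N P where "A = \<bar>\<alpha>1\<bar> + \<bar>\<alpha>2\<bar>"
      and "N = norm (Phi2 \<beta>2 (Phi1 \<beta>1 UL 0) 0 - Phi2 \<alpha>2 (Phi1 \<alpha>1 UL s) s)"
      and "P = norm (Phi2 \<alpha>2 (Phi1 \<alpha>1 UL s) s - Phi2 \<alpha>2 (Phi1 \<alpha>1 UL 0) 0)"
    have "\<bar>\<beta>1 - \<alpha>1\<bar> + \<bar>\<beta>2 - \<alpha>2\<bar> \<le> K * norm (Phi2 \<beta>2 (Phi1 \<beta>1 UL 0) 0 - Phi2 \<alpha>2 (Phi1 \<alpha>1 UL 0) 0)"
      using lower small by simp
    also have "\<dots> \<le> K * (N + P)"
      unfolding N_def P_def using \<open>K \<ge> 0\<close> by (intro mult_left_mono norm_diff_triangle_le) auto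
    also have "\<dots> \<le> K * (N + K' * A * s)"
      using perturbation[of UL \<alpha>1 \<alpha>2 s] small \<open>K \<ge> 0\<close> by (simp add: A_def P_def mult_left_mono)
    also have "\<dots> \<le> (1 + K + K * K') * A * s + (1 + K + K * K') * N"
      using \<open>K \<ge> 0\<close> \<open>K' \<ge> 0\<close> \<open>0 \<le> s\<close> by (simp add: A_def N_def algebra_simps)
    finally show "\<bar>\<beta>1 - \<alpha>1\<bar> + \<bar>\<beta>2 - \<alpha>2\<bar> \<le> (1 + K + K * K') * (\<bar>\<alpha>1\<bar> + \<bar>\<alpha>2\<bar>) * s + (1 + K + K * K') * N"
      by (simp add: A_def)
  qed
qed

lemma wave_curve_imp_curve_family:
  assumes "wave_curve \<gamma> ainf \<delta> lam r Phi" and "\<delta> > 0"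
  shows "curve_family Phi Ubar \<delta> (r Ubar 0)"
proof
  show "0 < \<delta>" by fact
  have "ball (0, Ubar, 0) \<delta> \<subseteq> {(a, U, s). \<bar>a\<bar> < \<delta> \<and> dist U Ubar < \<delta> \<and> \<bar>s\<bar> < \<delta>}"
  proof clarify
    fix a s :: real and U :: "real \<times> real"
    assume "(a, U, s) \<in> ball (0, Ubar, 0) \<delta>"
    then have "dist (a, U, s) (0, Ubar, 0) < \<delta>"
      by (simp add: dist_commute)
    moreover have "\<bar>a\<bar> \<le> dist (a, U, s) (0, Ubar, 0)" "dist (U, s) (Ubar, 0) \<le> dist (a, U, s) (0, Ubar, 0)"
      using dist_fst_le[of "(a, U, s)" "(0, Ubar, 0)"] dist_snd_le[of "(a, U, s)" "(0, Ubar, 0)"] by auto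
    moreover have "dist U Ubar \<le> dist (U, s) (Ubar, 0)" "\<bar>s\<bar> \<le> dist (U, s) (Ubar, 0)"
      using dist_fst_le[of "(U, s)" "(Ubar, 0)"] dist_snd_le[of "(U, s)" "(Ubar, 0)"] by auto
    ultimately show "\<bar>a\<bar> < \<delta> \<and> dist U Ubar < \<delta> \<and> \<bar>s\<bar> < \<delta>"
      by linarith
  qed
  then show "C2_on (\<lambda>(a, U, s). Phi a U s) (ball (0, Ubar, 0) \<delta>)"
    using assms(1) C2_on_subset unfolding wave_curve_def by blast
  have start: "Phi 0 U s = U \<and> ((\<lambda>a. Phi a U s) has_vector_derivative r U s) (at 0)"
    if "dist U Ubar < \<delta>" "0 \<le> s" "s < \<delta>" for U s
    using assms(1) that unfolding wave_curve_def by blast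
  then show "Phi 0 U s = U" if "dist U Ubar < \<delta>" "0 \<le> s" "s < \<delta>" for U s
    using that by blast
  show "((\<lambda>a. Phi a Ubar 0) has_vector_derivative r Ubar 0) (at 0)"
    using start[of Ubar 0] assms(2) by simp
qed

lemma Fflux_has_derivative_at_Ubar:
  assumes "\<gamma> \<noteq> 1" and "ainf \<noteq> 0"
  shows "((\<lambda>W. Fflux \<gamma> ainf W 0) has_derivative (\<lambda>h. (snd h, fst h / ainf\<^sup>2))) (at Ubar)"
  unfolding Fflux_def uvel_def Ubar_def using assms
  by (auto intro!: derivative_eq_intros simp: fun_eq_iff)

lemma char_fields_eigenvectors_independent:
  assumes "\<gamma> \<noteq> 1" and "ainf \<noteq> 0" and "\<delta> > 0" and "char_fields \<gamma> ainf \<delta> lam1 lam2 r1 r2"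
    and "x1 *\<^sub>R r1 Ubar 0 + x2 *\<^sub>R r2 Ubar 0 = 0"
  shows "x1 = 0 \<and> x2 = 0"
proof -
  have "lam1 Ubar 0 < lam2 Ubar 0"
    and "is_char \<gamma> ainf (lam1 Ubar 0) (r1 Ubar 0) Ubar 0" "is_char \<gamma> ainf (lam2 Ubar 0) (r2 Ubar 0) Ubar 0"
    using assms(4)[unfolded char_fields_def, rule_format, of Ubar 0] assms(3) by auto
  moreover have "frechet_derivative (\<lambda>W. Gflux \<gamma> ainf W 0) (at Ubar) = (\<lambda>V. V)"
    by (simp add: Gflux_def)
  ultimately have "r1 Ubar 0 \<noteq> 0" "r2 Ubar 0 \<noteq> 0"
    and "frechet_derivative (\<lambda>W. Fflux \<gamma> ainf W 0) (at Ubar) (r1 Ubar 0) = lam1 Ubar 0 *\<^sub>R r1 Ubar 0"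
    and "frechet_derivative (\<lambda>W. Fflux \<gamma> ainf W 0) (at Ubar) (r2 Ubar 0) = lam2 Ubar 0 *\<^sub>R r2 Ubar 0"
    by (auto simp: is_char_def)
  moreover have "linear (frechet_derivative (\<lambda>W. Fflux \<gamma> ainf W 0) (at Ubar))"
    using Fflux_has_derivative_at_Ubar[OF assms(1,2)] frechet_derivative_at has_derivative_linear
    by metis
  ultimately show ?thesis
    using eigenvectors_independent assms(5) \<open>lam1 Ubar 0 < lam2 Ubar 0\<close> by (metis less_irrefl)
qed

lemma wave_curves_composite_stability:
  assumes "\<gamma> > 1" and "ainf > 0" and "\<delta> > 0"
    and "char_fields \<gamma> ainf \<delta> lam1 lam2 r1 r2"
    and "wave_curve \<gamma> ainf \<delta> lam1 r1 Phi1" and "wave_curve \<gamma> ainf \<delta> lam2 r2 Phi2"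
  obtains \<epsilon> C where "\<epsilon> > 0" and "C > 0"
    and "\<And>UL \<alpha>1 \<alpha>2 \<beta>1 \<beta>2 s. dist UL Ubar < \<epsilon> \<Longrightarrow> \<bar>\<alpha>1\<bar> < \<epsilon> \<Longrightarrow> \<bar>\<alpha>2\<bar> < \<epsilon> \<Longrightarrow> \<bar>\<beta>1\<bar> < \<epsilon> \<Longrightarrow> \<bar>\<beta>2\<bar> < \<epsilon> \<Longrightarrow>
      0 \<le> s \<Longrightarrow> s < \<epsilon> \<Longrightarrow>
      \<bar>\<beta>1 - \<alpha>1\<bar> + \<bar>\<beta>2 - \<alpha>2\<bar> \<le> C * (\<bar>\<alpha>1\<bar> + \<bar>\<alpha>2\<bar>) * s
        + C * norm (Phi2 \<beta>2 (Phi1 \<beta>1 UL 0) 0 - Phi2 \<alpha>2 (Phi1 \<alpha>1 UL s) s)"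
proof -
  have families: "curve_family Phi1 Ubar \<delta> (r1 Ubar 0)" "curve_family Phi2 Ubar \<delta> (r2 Ubar 0)"
    using wave_curve_imp_curve_family assms(3,5,6) by blast+
  have "x1 = 0 \<and> x2 = 0" if "x1 *\<^sub>R r1 Ubar 0 + x2 *\<^sub>R r2 Ubar 0 = 0" for x1 x2
    using assms(1,2) by (intro char_fields_eigenvectors_independent[OF _ _ assms(3,4) that]) auto
  then show thesis
    using composite_stability[OF families] that by blast
qed

theorem proposition3p2:
  fixes \<gamma> ainf \<delta> :: real
    and lam1 lam2 :: "real \<times> real \<Rightarrow> real \<Rightarrow> real"
    and r1 r2 :: "real \<times> real \<Rightarrow> real \<Rightarrow> real \<times> real"
    and Phi1 Phi2 :: "real \<Rightarrow> real \<times> real \<Rightarrow> real \<Rightarrow> real \<times> real"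
  assumes "\<gamma> > 1" and "ainf > 0" and "\<delta> > 0"
    and "char_fields \<gamma> ainf \<delta> lam1 lam2 r1 r2"
    and "wave_curve \<gamma> ainf \<delta> lam1 r1 Phi1"
    and "wave_curve \<gamma> ainf \<delta> lam2 r2 Phi2"
  shows "\<exists>\<epsilon> \<tau>1 C. \<epsilon> > 0 \<and> \<tau>1 > 0 \<and> C > 0 \<and>
    (\<forall>\<tau> UL UhR UR \<alpha>1 \<alpha>2 \<beta>1 \<beta>2.
       0 < \<tau> \<and> \<tau> < \<tau>1 \<and>
       dist UL Ubar < \<epsilon> \<and> dist UhR Ubar < \<epsilon> \<and> dist UR Ubar < \<epsilon> \<and>
       \<bar>\<alpha>1\<bar> < \<epsilon> \<and> \<bar>\<alpha>2\<bar> < \<epsilon> \<and> \<bar>\<beta>1\<bar> < \<epsilon> \<and> \<bar>\<beta>2\<bar> < \<epsilon> \<longrightarrow>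
       ((UR = Phi2 \<beta>2 (Phi1 \<beta>1 UL 0) 0 \<and>
         UR = Phi2 \<alpha>2 (Phi1 \<alpha>1 UL (\<tau>^2)) (\<tau>^2)) \<longrightarrow>
          \<bar>\<beta>1 - \<alpha>1\<bar> \<le> C * (\<bar>\<alpha>1\<bar> + \<bar>\<alpha>2\<bar>) * \<tau>^2 \<and>
          \<bar>\<beta>2 - \<alpha>2\<bar> \<le> C * (\<bar>\<alpha>1\<bar> + \<bar>\<alpha>2\<bar>) * \<tau>^2) \<and>
       ((UR = Phi2 \<beta>2 (Phi1 \<beta>1 UL 0) 0 \<and>
         UhR = Phi2 \<alpha>2 (Phi1 \<alpha>1 UL (\<tau>^2)) (\<tau>^2)) \<longrightarrow>
          \<bar>\<beta>1 - \<alpha>1\<bar> \<le> C * (\<bar>\<alpha>1\<bar> + \<bar>\<alpha>2\<bar>) * \<tau>^2 + C * norm (UR - UhR) \<and>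
          \<bar>\<beta>2 - \<alpha>2\<bar> \<le> C * (\<bar>\<alpha>1\<bar> + \<bar>\<alpha>2\<bar>) * \<tau>^2 + C * norm (UR - UhR)))"
proof -
  obtain \<epsilon> C where "\<epsilon> > 0" "C > 0" and stability: "\<And>UL \<alpha>1 \<alpha>2 \<beta>1 \<beta>2 s. dist UL Ubar < \<epsilon> \<Longrightarrow>
      \<bar>\<alpha>1\<bar> < \<epsilon> \<Longrightarrow> \<bar>\<alpha>2\<bar> < \<epsilon> \<Longrightarrow> \<bar>\<beta>1\<bar> < \<epsilon> \<Longrightarrow> \<bar>\<beta>2\<bar> < \<epsilon> \<Longrightarrow> 0 \<le> s \<Longrightarrow> s < \<epsilon> \<Longrightarrow>
      \<bar>\<beta>1 - \<alpha>1\<bar> + \<bar>\<beta>2 - \<alpha>2\<bar> \<le> C * (\<bar>\<alpha>1\<bar> + \<bar>\<alpha>2\<bar>) * s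
        + C * norm (Phi2 \<beta>2 (Phi1 \<beta>1 UL 0) 0 - Phi2 \<alpha>2 (Phi1 \<alpha>1 UL s) s)"
    using wave_curves_composite_stability[OF assms] by blast
  have square_small: "\<tau>\<^sup>2 < \<epsilon>" if "0 < \<tau>" "\<tau> < min 1 \<epsilon>" for \<tau> :: real
  proof -
    have "\<tau> * \<tau> \<le> 1 * \<tau>"
      using that by (intro mult_right_mono) auto
    then show ?thesis
      using that power2_eq_square[of \<tau>] by linarith
  qed
  \<comment> \<open>The hypothesis is kept in the conjunctive shape of the theorem, so that \<open>drule\<close> can use it below.\<close>
  have estimate: "\<bar>\<beta>1 - \<alpha>1\<bar> \<le> C * (\<bar>\<alpha>1\<bar> + \<bar>\<alpha>2\<bar>) * \<tau>\<^sup>2 + C * norm (UR' - UhR')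
      \<and> \<bar>\<beta>2 - \<alpha>2\<bar> \<le> C * (\<bar>\<alpha>1\<bar> + \<bar>\<alpha>2\<bar>) * \<tau>\<^sup>2 + C * norm (UR' - UhR')"
    if "0 < \<tau> \<and> \<tau> < min 1 \<epsilon> \<and> dist UL Ubar < \<epsilon> \<and> dist UhR Ubar < \<epsilon> \<and> dist UR Ubar < \<epsilon> \<and>
        \<bar>\<alpha>1\<bar> < \<epsilon> \<and> \<bar>\<alpha>2\<bar> < \<epsilon> \<and> \<bar>\<beta>1\<bar> < \<epsilon> \<and> \<bar>\<beta>2\<bar> < \<epsilon>"
      and "UR' = Phi2 \<beta>2 (Phi1 \<beta>1 UL 0) 0" and "UhR' = Phi2 \<alpha>2 (Phi1 \<alpha>1 UL (\<tau>\<^sup>2)) (\<tau>\<^sup>2)"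
    for \<tau> UL UhR UR UR' UhR' \<alpha>1 \<alpha>2 \<beta>1 \<beta>2
  proof -
    have "\<bar>\<beta>1 - \<alpha>1\<bar> + \<bar>\<beta>2 - \<alpha>2\<bar> \<le> C * (\<bar>\<alpha>1\<bar> + \<bar>\<alpha>2\<bar>) * \<tau>\<^sup>2 + C * norm (UR' - UhR')"
      using stability[of UL \<alpha>1 \<alpha>2 \<beta>1 \<beta>2 "\<tau>\<^sup>2"] square_small[of \<tau>] that by auto
    then show ?thesis
      by linarith
  qed
  show ?thesis
  proof (rule exI[of _ \<epsilon>], rule exI[of _ "min 1 \<epsilon>"], rule exI[of _ C], intro conjI allI impI)
    show "\<epsilon> > 0" "min 1 \<epsilon> > 0" "C > 0"
      using \<open>\<epsilon> > 0\<close> \<open>C > 0\<close> by auto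
  qed (drule estimate[OF _ refl refl], simp)+
qed

end
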